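(* Let $A$ be a unital $A_\infty$-algebra and $\phi=\sum_{i\ge0}\phi_iv^i$ a negative cyclic cocycle of $A$. Define $\widetilde{\phi_0}(\vec a,\underline v,\vec b)(w):=\phi_0(\vec a,v,\vec b)(w)-\phi_0(\vec b,w,\vec a)(v)$. Then $\widetilde{\phi_0}$ is an $A_\infty$-bimodule map from $A$ to $A^*$ and it satisfies the skew-symmetry and closedness conditions of a strong homotopy inner product.
   Context: $A=(C,\{m_k\})$: $A_\infty$-algebra over a field $\mathbf k$ of characteristic 0 with degree $+1$ maps $m_k:C[1]^{\otimes k}\to C[1]$, $|x|'=|x|-1$, unit $I$. The dual $A^*$ is an $A_\infty$-bimodule via $d^*_{k,l}(x_1,\dots,x_k,v^*,x_{k+1},\dots,x_{k+l})(w)=\pm v^*(m_{k+l+1}(x_{k+1},\dots,x_{k+l},w,x_1,\dots,x_k))$. An $A_\infty$-bimodule map $\phi:A\to A^*$ is a family $\phi_{k,l}:C[1]^{\otimes k}\otimes\underline{C[1]}\otimes C[1]^{\otimes l}\to C^*$ with $\sum\pm\phi(\dots,m_j(\dots),\dots)=\sum\pm d^*(\dots,\phi(\dots),\dots)$ (sum over applying one $m_j$ to consecutive inputs, resp. applying $\phi$ to a consecutive block containing the module entry). Hochschild cochains $C^\bullet(A,A^* )=\bigoplus_n\mathrm{Hom}(\bar C[1]^{\otimes n},C^* )$ ($\bar C=C/\mathbf kI$), $b^*\eta(a_1,\dots,a_n)(a_{n+1})=\sum\pm\eta(\dots,m_k(\dots),\dots)(a_{n+1})+\sum\pm\eta(a_j,\dots,a_p)(m_k(a_{p+1},\dots,a_{n+1},a_1,\dots,a_{j-1}))$;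 $B^*\eta(a_1,\dots,a_n)(a_{n+1})=\sum_{\sigma\in\mathbb Z/(n+1)}\pm\eta(a_{\sigma(1)},\dots,a_{\sigma(n+1)})(I)$ (sum over cyclic rotations). A negative cyclic cocycle is $\phi=\sum_{i\ge0}\phi_iv^i$, $\phi_i\in C^\bullet(A,A^* )$, with $b^*\phi_i=B^*\phi_{i+1}$ for all $i$. Skew-symmetry: $\psi_{k,l}(\vec a,\underline v,\vec b)(w)=-(\pm)\psi_{l,k}(\vec b,\underline w,\vec a)(v)$. Closedness: for any cyclically ordered family $(a_1,\dots,a_{l+1})$ and $i<j<k$, $\psi(\dots,\underline{a_i},\dots)(a_j)\pm\psi(\dots,\underline{a_j},\dots)(a_k)\pm\psi(\dots,\underline{a_k},\dots)(a_i)=0$, where $\psi(\dots,\underline{a_p},\dots)(a_q)$ is $\psi$ applied to the remaining elements in cyclic order with module entry $a_p$, evaluated at $a_q$. All signs are Koszul signs. *)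

theory Defs
  imports Main
begin

text \<open>
C is the graded k-vector space with homogeneous basis indexed by the type 'b,
with (unshifted) degree function deg; the unit I is the basis element u.
A multilinear map C[1]^{tensor n} -> C[1] is given on basis tensors by coefficients:
m xs e is the coefficient of the basis vector e in m_{length xs}(xs).
A map into C^* evaluated at a last argument is a function on basis lists:
eta (a_1,...,a_n,a_{n+1}) stands for eta(a_1,...,a_n)(a_{n+1}).
All Koszul signs use shifted degrees |x|' = deg x - 1 (also for the evaluation slot).
\<close>

definition sgnk :: "int \<Rightarrow> 'k::ring_1" where
  "sgnk n = (if even n then 1 else -1)"

definition sd :: "('b \<Rightarrow> int) \<Rightarrow> 'b \<Rightarrow> int" where
  "sd deg x = deg x - 1"

definition eps :: "('b \<Rightarrow> int) \<Rightarrow> 'b list \<Rightarrow> int" where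
  "eps deg xs = sum_list (map (sd deg) xs)"

definition rot :: "nat \<Rightarrow> 'b list \<Rightarrow> 'b list" where
  "rot j xs = drop j xs @ take j xs"

definition rsign :: "('b \<Rightarrow> int) \<Rightarrow> nat \<Rightarrow> 'b list \<Rightarrow> 'k::ring_1" where
  "rsign deg j xs = sgnk (eps deg (take j xs) * eps deg (drop j xs))"

text \<open>multilinear substitution of m(B) into the slot between pre and post of F\<close>
definition ins :: "('b list \<Rightarrow> 'b \<Rightarrow> 'k::comm_ring_1) \<Rightarrow> ('b list \<Rightarrow> 'k)
    \<Rightarrow> 'b list \<Rightarrow> 'b list \<Rightarrow> 'b list \<Rightarrow> 'k" where
  "ins m F pre B post = (\<Sum>e\<in>{e. m B e \<noteq> 0}. m B e * F (pre @ e # post))"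

text \<open>A-infinity algebra (m_0 = 0, degree +1 maps on C[1], finitely supported outputs)\<close>
definition ainf_alg :: "('b \<Rightarrow> int) \<Rightarrow> ('b list \<Rightarrow> 'b \<Rightarrow> 'k::comm_ring_1) \<Rightarrow> bool" where
  "ainf_alg deg m \<longleftrightarrow>
     (\<forall>xs. finite {e. m xs e \<noteq> 0}) \<and>
     (\<forall>e. m [] e = 0) \<and>
     (\<forall>xs e. m xs e \<noteq> 0 \<longrightarrow> sd deg e = eps deg xs + 1) \<and>
     (\<forall>xs e. (\<Sum>i<length xs. \<Sum>L\<in>{1..length xs - i}.
         sgnk (eps deg (take i xs)) *
         ins m (\<lambda>ys. m ys e) (take i xs) (take L (drop i xs)) (drop (i + L) xs)) = 0)"

definition unital :: "('b \<Rightarrow> int) \<Rightarrow> ('b list \<Rightarrow> 'b \<Rightarrow> 'k::comm_ring_1) \<Rightarrow> 'b \<Rightarrow> bool" where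
  "unital deg m u \<longleftrightarrow>
     deg u = 0 \<and>
     (\<forall>x e. m [u, x] e = (if e = x then 1 else 0)) \<and>
     (\<forall>x e. m [x, u] e = (if e = x then sgnk (deg x) else 0)) \<and>
     (\<forall>xs e. u \<in> set xs \<and> length xs \<noteq> 2 \<longrightarrow> m xs e = 0)"

text \<open>Hochschild differential b^* on C^*(A,A^*), as a function of (a_1..a_n, a_{n+1})\<close>
definition hoch_b :: "('b \<Rightarrow> int) \<Rightarrow> ('b list \<Rightarrow> 'b \<Rightarrow> 'k::comm_ring_1) \<Rightarrow> ('b list \<Rightarrow> 'k)
    \<Rightarrow> 'b list \<Rightarrow> 'k" where
  "hoch_b deg m \<eta> xs =
     (\<Sum>i<length xs. \<Sum>L\<in>{1..length xs - 1 - i}.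
        sgnk (eps deg (take i xs)) *
        ins m \<eta> (take i xs) (take L (drop i xs)) (drop (i + L) xs))
   + (\<Sum>j<length xs. \<Sum>p\<le>length xs - 1 - j.
        rsign deg j xs * sgnk (eps deg (take p (rot j xs))) *
        ins m \<eta> (take p (rot j xs)) (drop p (rot j xs)) [])"

definition conn_B :: "('b \<Rightarrow> int) \<Rightarrow> 'b \<Rightarrow> ('b list \<Rightarrow> 'k::comm_ring_1) \<Rightarrow> 'b list \<Rightarrow> 'k" where
  "conn_B deg u \<eta> xs = (\<Sum>j<length xs. rsign deg j xs * \<eta> (rot j xs @ [u]))"

text \<open>normalized cochains (arguments in \bar C = C / k I) and finitely many arities (direct sum)\<close>
definition normalized :: "'b \<Rightarrow> ('b list \<Rightarrow> 'k::zero) \<Rightarrow> bool" where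
  "normalized u \<eta> \<longleftrightarrow> (\<forall>xs. u \<in> set (butlast xs) \<longrightarrow> \<eta> xs = 0)"

definition fin_arity :: "('b list \<Rightarrow> 'k::zero) \<Rightarrow> bool" where
  "fin_arity \<eta> \<longleftrightarrow> (\<exists>n. \<forall>xs. n < length xs \<longrightarrow> \<eta> xs = 0)"

definition neg_cyclic_cocycle :: "('b \<Rightarrow> int) \<Rightarrow> ('b list \<Rightarrow> 'b \<Rightarrow> 'k::comm_ring_1) \<Rightarrow> 'b
    \<Rightarrow> (nat \<Rightarrow> 'b list \<Rightarrow> 'k) \<Rightarrow> bool" where
  "neg_cyclic_cocycle deg m u \<phi> \<longleftrightarrow>
     (\<forall>i. normalized u (\<phi> i) \<and> fin_arity (\<phi> i)) \<and>
     (\<forall>i xs. xs \<noteq> [] \<and> u \<notin> set (butlast xs) \<longrightarrow>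
        hoch_b deg m (\<phi> i) xs = conn_B deg u (\<phi> (Suc i)) xs)"

text \<open>A bimodule-type map psi: psi k (a_1..a_k, v, b_1..b_l, w) = psi_{k,l}(a,v,b)(w)\<close>

definition phi_tilde :: "('b \<Rightarrow> int) \<Rightarrow> ('b list \<Rightarrow> 'k::comm_ring_1) \<Rightarrow> nat \<Rightarrow> 'b list \<Rightarrow> 'k" where
  "phi_tilde deg \<phi>0 k xs = \<phi>0 xs - rsign deg (Suc k) xs * \<phi>0 (rot (Suc k) xs)"

text \<open>A-infinity bimodule map A -> A^*, with d^*(x',v^*,x'')(w) written out:
  d^*(x',v^*,x'')(w) = - (-1)^{eps(x')(|v^*|'+eps(x'')+|w|') + |v^*|'} v^*(m(x'',w,x'))\<close>
definition bimod_map :: "('b \<Rightarrow> int) \<Rightarrow> ('b list \<Rightarrow> 'b \<Rightarrow> 'k::comm_ring_1)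
    \<Rightarrow> (nat \<Rightarrow> 'b list \<Rightarrow> 'k) \<Rightarrow> bool" where
  "bimod_map deg m \<psi> \<longleftrightarrow>
    (\<forall>k xs. Suc (Suc k) \<le> length xs \<longrightarrow>
      (\<Sum>i<length xs. \<Sum>L\<in>{1..length xs - 1 - i}.
         sgnk (eps deg (take i xs)) *
         ins m (\<psi> (if i \<le> k \<and> k < i + L then i else if i + L \<le> k then k + 1 - L else k))
           (take i xs) (take L (drop i xs)) (drop (i + L) xs))
      = (\<Sum>i\<le>k. \<Sum>L\<in>{k + 1 - i..length xs - 1 - i}.
         - (rsign deg i xs * sgnk (eps deg (take L (drop i xs)))) *
         ins m (\<psi> (k - i)) (take L (drop i xs)) (drop (i + L) xs @ take i xs) []))"

definition skew_sym :: "('b \<Rightarrow> int) \<Rightarrow> (nat \<Rightarrow> 'b list \<Rightarrow> 'k::comm_ring_1) \<Rightarrow> bool" where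
  "skew_sym deg \<psi> \<longleftrightarrow>
    (\<forall>k xs. Suc (Suc k) \<le> length xs \<longrightarrow>
      \<psi> k xs = - (rsign deg (Suc k) xs * \<psi> (length xs - 2 - k) (rot (Suc k) xs)))"

text \<open>psi(..., module entry a_p, ...)(a_q) with the Koszul sign of the rotation of the cyclic family\<close>
definition cterm :: "('b \<Rightarrow> int) \<Rightarrow> (nat \<Rightarrow> 'b list \<Rightarrow> 'k::comm_ring_1) \<Rightarrow> 'b list
    \<Rightarrow> nat \<Rightarrow> nat \<Rightarrow> 'k" where
  "cterm deg \<psi> as p q = rsign deg (Suc q) as *
     \<psi> ((p + length as - Suc q) mod length as) (rot (Suc q) as)"

definition closed_ip :: "('b \<Rightarrow> int) \<Rightarrow> (nat \<Rightarrow> 'b list \<Rightarrow> 'k::comm_ring_1) \<Rightarrow> bool" where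
  "closed_ip deg \<psi> \<longleftrightarrow>
    (\<forall>as i j k. i < j \<and> j < k \<and> k < length as \<longrightarrow>
       cterm deg \<psi> as i j + cterm deg \<psi> as j k + cterm deg \<psi> as k i = 0)"

end

theory Submission
  imports Defs
begin

text \<open>
  Proof of Proposition 6.1.  For a cochain \<open>\<eta>\<close> write \<open>\<eta>\<^sup>~ = phi_tilde deg \<eta>\<close>, i.e.
  \<open>\<eta>\<^sup>~_k(xs) = \<eta>(xs) - \<sigma> \<eta>(rot_{k+1} xs)\<close>, where \<open>rot_{k+1}\<close> moves the entries up to and
  including the module entry to the end and \<open>\<sigma>\<close> is its Koszul sign.

  Skew-symmetry and closedness are formal consequences of the composition law of signed
  cyclic rotations, valid for an arbitrary cochain (first three sections).

  We write \<open>b\<^sup>*\<eta>\<close> as a sum of signed terms indexed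
  by the operated block, compute every term of both sides of the bimodule equation for
  \<open>\<eta>\<^sup>~\<close> as such a term of \<open>b\<^sup>*\<eta>\<close> on a rotated input, and match them by explicit
  bijections of index sets.  The outcome, valid for any operations of degree one and any
  cochain \<open>\<eta>\<close>, is that LHS - RHS equals \<open>b\<^sup>*\<eta>(xs) - \<sigma> b\<^sup>*\<eta>(rot_{k+1} xs)\<close>
  (lemma \<open>bimod_defect\<close>).  Finally, for a negative cyclic cocycle \<open>\<phi>\<close> we have
  \<open>b\<^sup>*\<phi>\<^sub>0 = B\<^sup>*\<phi>\<^sub>1\<close> on all nonempty inputs -- on inputs containing the unit both sides vanish,
  by normalization and strict unitality -- and Connes' operator \<open>B\<^sup>*\<phi>\<^sub>1\<close> is invariant
  under signed rotations, so the defect vanishes for \<open>\<eta> = \<phi>\<^sub>0\<close>.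
\<close>

lemma sgnk_mult: "sgnk a * sgnk b = (sgnk (a + b) :: 'k::ring_1)"
  by (auto simp: sgnk_def)

lemma sgnk_cong: "(even a \<longleftrightarrow> even b) \<Longrightarrow> (sgnk a :: 'k::ring_1) = sgnk b"
  by (auto simp: sgnk_def)

lemma sgnk_neg: "- sgnk a = (sgnk (a + 1) :: 'k::ring_1)"
  by (auto simp: sgnk_def)

lemma eps_Nil [simp]: "eps deg [] = 0"
  by (simp add: eps_def)

lemma eps_Cons [simp]: "eps deg (x # xs) = sd deg x + eps deg xs"
  by (simp add: eps_def)

lemma eps_append [simp]: "eps deg (xs @ ys) = eps deg xs + eps deg ys"
  by (simp add: eps_def)

section \<open>Cyclic rotations and their Koszul signs\<close>

lemma length_rot [simp]: "length (rot a xs) = length xs"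
  by (simp add: rot_def)

lemma set_rot [simp]: "set (rot j xs) = set xs"
  unfolding rot_def by (metis append_take_drop_id set_append sup_commute)

lemma rot_0 [simp]: "rot 0 xs = xs"
  by (simp add: rot_def)

lemma rsign_0 [simp]: "rsign deg 0 xs = 1"
  by (simp add: rsign_def sgnk_def)

lemma rot_app: "a = length X \<Longrightarrow> rot a (X @ Y) = Y @ X"
  by (simp add: rot_def)

lemma rsign_app: "a = length X \<Longrightarrow> rsign deg a (X @ Y) = sgnk (eps deg X * eps deg Y)"
  by (simp add: rsign_def)

lemma rot_app2: "a = length X + length Y \<Longrightarrow> rot a (X @ Y @ Z) = Z @ X @ Y"
  by (metis append.assoc length_append rot_app)

lemma rsign_app2:
  "a = length X + length Y \<Longrightarrow> rsign deg a (X @ Y @ Z) = sgnk ((eps deg X + eps deg Y) * eps deg Z)"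
  by (metis append.assoc eps_append length_append rsign_app)

lemma rot_rot_add:
  assumes "a + b \<le> length xs"
  shows "rot b (rot a xs) = rot (a + b) xs"
    and "rsign deg a xs * rsign deg b (rot a xs) = (rsign deg (a + b) xs :: 'k::ring_1)"
proof -
  define X where "X = take a xs"
  define Y where "Y = take b (drop a xs)"
  define Z where "Z = drop b (drop a xs)"
  have xs: "xs = X @ Y @ Z" "length X = a" "length Y = b"
    using assms unfolding X_def Y_def Z_def by (simp_all flip: drop_drop)
  show "rot b (rot a xs) = rot (a + b) xs"
    using xs by (simp add: rot_app rot_app2)
  have "rsign deg a xs * rsign deg b (rot a xs)
      = (sgnk (eps deg X * (eps deg Y + eps deg Z) + eps deg Y * (eps deg Z + eps deg X)) :: 'k)"
    using xs by (simp add: rot_app rsign_app sgnk_mult)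
  also have "\<dots> = sgnk ((eps deg X + eps deg Y) * eps deg Z)"
    by (rule sgnk_cong) (auto simp: even_add even_mult_iff)
  also have "\<dots> = rsign deg (a + b) xs"
    using xs by (simp add: rsign_app2)
  finally show "rsign deg a xs * rsign deg b (rot a xs) = (rsign deg (a + b) xs :: 'k)" .
qed

lemma rot_rot_wrap:
  assumes "a \<le> length xs" "b \<le> length xs" "length xs \<le> a + b"
  shows "rot b (rot a xs) = rot (a + b - length xs) xs"
    and "rsign deg a xs * rsign deg b (rot a xs) = (rsign deg (a + b - length xs) xs :: 'k::ring_1)"
proof -
  define c where "c = a + b - length xs"
  define X where "X = take c xs"
  define Y where "Y = take (length xs - b) (drop c xs)"
  define Z where "Z = drop a xs"
  have "(length xs - b) + c = a"
    using assms unfolding c_def by arith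
  then have "drop c xs = Y @ Z"
    unfolding Y_def Z_def by (metis append_take_drop_id drop_drop)
  then have xs: "xs = X @ Y @ Z"
    unfolding X_def by (metis append_take_drop_id)
  have la: "a = length X + length Y" and lb: "b = length Z + length X"
    using assms unfolding X_def Y_def Z_def c_def by auto
  show "rot b (rot a xs) = rot (a + b - length xs) xs"
    using xs la lb by (simp add: rot_app rot_app2)
  have "rsign deg a xs * rsign deg b (rot a xs)
      = (sgnk ((eps deg X + eps deg Y) * eps deg Z + (eps deg Z + eps deg X) * eps deg Y) :: 'k)"
    using xs la lb by (simp add: rot_app2 rsign_app2 sgnk_mult)
  also have "\<dots> = sgnk (eps deg X * (eps deg Y + eps deg Z))"
    by (rule sgnk_cong) (auto simp: even_add even_mult_iff)
  also have "\<dots> = rsign deg c xs"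
    using xs la lb unfolding c_def by (simp add: rsign_app)
  finally show "rsign deg a xs * rsign deg b (rot a xs) = (rsign deg (a + b - length xs) xs :: 'k)"
    unfolding c_def .
qed

definition rot_shift :: "nat \<Rightarrow> nat \<Rightarrow> nat \<Rightarrow> nat" where
  "rot_shift n k j = (if Suc k + j < n then Suc k + j else Suc k + j - n)"

lemma rot_rot_shift:
  assumes "Suc k \<le> length xs" "j < length xs"
  shows "rot j (rot (Suc k) xs) = rot (rot_shift (length xs) k j) xs"
    and "rsign deg (Suc k) xs * rsign deg j (rot (Suc k) xs)
           = (rsign deg (rot_shift (length xs) k j) xs :: 'k::ring_1)"
  using assms rot_rot_add[of "Suc k" j xs] rot_rot_wrap[of "Suc k" xs j]
  by (auto simp: rot_shift_def)

section \<open>Skew-symmetry and closedness of \<open>\<phi>\<^sup>~\<close>\<close>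

text \<open>Both properties hold for an arbitrary cochain: they only use the composition law of
  signed rotations.\<close>

lemma skew_sym_phi_tilde: "skew_sym deg (phi_tilde deg (\<phi>0 :: 'b list \<Rightarrow> 'k::comm_ring_1))"
  unfolding skew_sym_def
proof (intro allI impI)
  fix k and xs :: "'b list"
  assume k: "Suc (Suc k) \<le> length xs"
  define l where "l = length xs - 2 - k"
  have full: "Suc k + Suc l = length xs"
    using k unfolding l_def by arith
  have full_turn: "rot (Suc l) (rot (Suc k) xs) = xs"
    using rot_rot_add(1)[of "Suc k" "Suc l" xs] full by (simp add: rot_def)
  have sign: "rsign deg (Suc k) xs * rsign deg (Suc l) (rot (Suc k) xs) = (1 :: 'k)"
    using rot_rot_add(2)[of "Suc k" "Suc l" xs deg] full by (simp add: rsign_def sgnk_def)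
  show "phi_tilde deg \<phi>0 k xs = - (rsign deg (Suc k) xs * phi_tilde deg \<phi>0 l (rot (Suc k) xs))"
    unfolding phi_tilde_def length_rot full_turn
    using sign by (simp add: algebra_simps)
qed

text \<open>In the closedness condition, the term with module entry \<open>a_p\<close> evaluated at \<open>a_q\<close>
  is the difference of the two signed rotations of \<open>\<phi>0\<close> ending at \<open>a_q\<close> and at \<open>a_p\<close>; the
  cyclic sum of three such differences telescopes.\<close>
lemma cterm_phi_tilde:
  assumes "p < length as" "q < length as" "p \<noteq> q"
  shows "cterm deg (phi_tilde deg (\<phi>0 :: 'b list \<Rightarrow> 'k::comm_ring_1)) as p q
     = rsign deg (Suc q) as * \<phi>0 (rot (Suc q) as) - rsign deg (Suc p) as * \<phi>0 (rot (Suc p) as)"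
proof -
  let ?n = "length as"
  define k where "k = (p + ?n - Suc q) mod ?n"
  have key: "rot (Suc k) (rot (Suc q) as) = rot (Suc p) as
    \<and> rsign deg (Suc q) as * rsign deg (Suc k) (rot (Suc q) as) = (rsign deg (Suc p) as :: 'k)"
  proof (cases "q < p")
    case True
    then have "k = p - q - 1"
      unfolding k_def using assms by (simp add: mod_if)
    then have "Suc q + Suc k = Suc p"
      using True by simp
    then show ?thesis
      using rot_rot_add[of "Suc q" "Suc k" as] assms by simp
  next
    case False
    then have "k = p + ?n - Suc q"
      unfolding k_def using assms by simp
    then have "Suc q + Suc k - ?n = Suc p" "Suc k \<le> ?n" "?n \<le> Suc q + Suc k"
      using False assms by auto
    then show ?thesis
      using rot_rot_wrap[of "Suc q" as "Suc k"] assms by simp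
  qed
  have "cterm deg (phi_tilde deg \<phi>0) as p q
      = rsign deg (Suc q) as * \<phi>0 (rot (Suc q) as)
        - (rsign deg (Suc q) as * rsign deg (Suc k) (rot (Suc q) as)) * \<phi>0 (rot (Suc k) (rot (Suc q) as))"
    unfolding cterm_def phi_tilde_def k_def by (simp add: algebra_simps)
  with key show ?thesis
    by simp
qed

lemma closed_ip_phi_tilde: "closed_ip deg (phi_tilde deg (\<phi>0 :: 'b list \<Rightarrow> 'k::comm_ring_1))"
  unfolding closed_ip_def by (auto simp: cterm_phi_tilde)

section \<open>The Hochschild differential as a sum of signed terms\<close>

text \<open>The term of \<open>b\<^sup>*\<eta>(zs)\<close> (with the last entry of \<open>zs\<close> as evaluation slot) in which an
  operation is applied to the block of \<open>L\<close> entries starting at position \<open>i\<close>.\<close>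
definition hterm :: "('b \<Rightarrow> int) \<Rightarrow> ('b list \<Rightarrow> 'b \<Rightarrow> 'k::comm_ring_1) \<Rightarrow> ('b list \<Rightarrow> 'k)
    \<Rightarrow> 'b list \<Rightarrow> nat \<Rightarrow> nat \<Rightarrow> 'k" where
  "hterm deg m \<eta> zs i L =
     sgnk (eps deg (take i zs)) * ins m \<eta> (take i zs) (take L (drop i zs)) (drop (i + L) zs)"

text \<open>The same term computed on the signed rotation \<open>rot a xs\<close>; all terms of \<open>b\<^sup>*\<eta>\<close>, of its
  rotations and of both sides of the bimodule equation are of this form.\<close>
definition rhterm :: "('b \<Rightarrow> int) \<Rightarrow> ('b list \<Rightarrow> 'b \<Rightarrow> 'k::comm_ring_1) \<Rightarrow> ('b list \<Rightarrow> 'k)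
    \<Rightarrow> 'b list \<Rightarrow> nat \<Rightarrow> nat \<Rightarrow> nat \<Rightarrow> 'k" where
  "rhterm deg m \<eta> xs a i L = rsign deg a xs * hterm deg m \<eta> (rot a xs) i L"

lemma hterm_split:
  "hterm deg m \<eta> (P @ B @ Q) (length P) (length B) = sgnk (eps deg P) * ins m \<eta> P B Q"
  by (simp add: hterm_def)

text \<open>Index pairs of the two double sums in \<open>b\<^sup>*\<close>: blocks avoiding the evaluation slot, and
  blocks that contain it after rotating by \<open>j\<close>.\<close>
definition inner_idx :: "nat \<Rightarrow> (nat \<times> nat) set" where
  "inner_idx n = {(i, L). i < n \<and> 1 \<le> L \<and> L \<le> n - 1 - i}"

definition outer_idx :: "nat \<Rightarrow> (nat \<times> nat) set" where
  "outer_idx n = {(j, p). j < n \<and> p \<le> n - 1 - j}"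

lemma finite_nat_box: "S \<subseteq> {..n::nat} \<times> {..n} \<Longrightarrow> finite S"
  by (rule finite_subset) auto

lemma finite_inner_idx: "finite (inner_idx n)"
  by (rule finite_nat_box[of _ n]) (auto simp: inner_idx_def)

lemma finite_outer_idx: "finite (outer_idx n)"
  by (rule finite_nat_box[of _ n]) (auto simp: outer_idx_def)

lemma sum_inner_idx:
  "(\<Sum>i<n. \<Sum>L\<in>{1..n - 1 - i}. f i L) = (\<Sum>(i, L)\<in>inner_idx n. f i L)"
proof -
  have sigma: "Sigma {..<n} (\<lambda>i. {1..n - 1 - i}) = inner_idx n"
    by (auto simp: inner_idx_def)
  show ?thesis
    unfolding sigma[symmetric] by (rule sum.Sigma) auto
qed

lemma sum_outer_idx:
  "(\<Sum>j<n. \<Sum>p\<le>n - 1 - j. f j p) = (\<Sum>(j, p)\<in>outer_idx n. f j p)"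
proof -
  have sigma: "Sigma {..<n} (\<lambda>j. {..n - 1 - j}) = outer_idx n"
    by (auto simp: outer_idx_def)
  show ?thesis
    unfolding sigma[symmetric] by (rule sum.Sigma) auto
qed

lemma hoch_b_terms:
  "hoch_b deg m \<eta> xs = (\<Sum>(i, L)\<in>inner_idx (length xs). rhterm deg m \<eta> xs 0 i L)
     + (\<Sum>(j, p)\<in>outer_idx (length xs). rhterm deg m \<eta> xs j p (length xs - p))"
  unfolding hoch_b_def sum_inner_idx sum_outer_idx
  by (intro arg_cong2[where f = "(+)"] sum.cong)
    (auto simp: rhterm_def hterm_def outer_idx_def mult.assoc)

lemma rhterm_rot:
  assumes "Suc k \<le> length xs" "j < length xs"
  shows "rsign deg (Suc k) xs * rhterm deg m \<eta> (rot (Suc k) xs) j p L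
       = (rhterm deg m \<eta> xs (rot_shift (length xs) k j) p L :: 'k::comm_ring_1)"
  using rot_rot_shift(1)[OF assms] rot_rot_shift(2)[OF assms, where 'k = 'k and deg = deg]
  unfolding rhterm_def by (simp add: mult.assoc[symmetric])

lemma hoch_b_rot:
  fixes \<eta> :: "'b list \<Rightarrow> 'k::comm_ring_1"
  assumes "Suc k \<le> length xs"
  shows "rsign deg (Suc k) xs * hoch_b deg m \<eta> (rot (Suc k) xs)
     = (\<Sum>(i, L)\<in>inner_idx (length xs). rhterm deg m \<eta> xs (Suc k) i L)
     + (\<Sum>(j, p)\<in>outer_idx (length xs). rhterm deg m \<eta> xs (rot_shift (length xs) k j) p (length xs - p))"
proof -
  have inner: "rsign deg (Suc k) xs * rhterm deg m \<eta> (rot (Suc k) xs) 0 i L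
      = rhterm deg m \<eta> xs (Suc k) i L" for i L
    by (simp add: rhterm_def)
  have outer: "(j, p) \<in> outer_idx (length xs) \<Longrightarrow>
      rsign deg (Suc k) xs * rhterm deg m \<eta> (rot (Suc k) xs) j p (length xs - p)
      = rhterm deg m \<eta> xs (rot_shift (length xs) k j) p (length xs - p)" for j p
    by (rule rhterm_rot[OF assms]) (simp add: outer_idx_def)
  show ?thesis
    unfolding hoch_b_terms[of deg m \<eta> "rot (Suc k) xs"] length_rot distrib_left sum_distrib_left
    by (intro arg_cong2[where f = "(+)"] sum.cong) (auto simp: inner outer)
qed

text \<open>The only property of the operations \<open>m\<close> entering the bimodule identity below: each
  \<open>m_k\<close> has degree \<open>+1\<close> on \<open>C[1]\<close>.  No \<open>A\<^sub>\<infinity>\<close>-relation is needed.\<close>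
definition degree_one :: "('b \<Rightarrow> int) \<Rightarrow> ('b list \<Rightarrow> 'b \<Rightarrow> 'k::zero) \<Rightarrow> bool" where
  "degree_one deg m \<longleftrightarrow> (\<forall>B e. m B e \<noteq> 0 \<longrightarrow> sd deg e = eps deg B + 1)"

lemma ainf_alg_degree_one: "ainf_alg deg m \<Longrightarrow> degree_one deg m"
  by (simp add: ainf_alg_def degree_one_def)

definition rot_cochain :: "('b \<Rightarrow> int) \<Rightarrow> ('b list \<Rightarrow> 'k::comm_ring_1) \<Rightarrow> nat \<Rightarrow> 'b list \<Rightarrow> 'k" where
  "rot_cochain deg \<eta> k ys = rsign deg (Suc k) ys * \<eta> (rot (Suc k) ys)"

lemma ins_phi_tilde:
  "ins m (phi_tilde deg \<eta> k) pre B post = ins m \<eta> pre B post - ins m (rot_cochain deg \<eta> k) pre B post"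
  by (simp add: ins_def phi_tilde_def rot_cochain_def sum_subtractf right_diff_distrib)

lemma ins_cong:
  assumes "degree_one deg m"
    and "\<And>e. sd deg e = eps deg B + 1 \<Longrightarrow> F (pre @ e # post) = c * G (pre' @ e # post')"
  shows "ins m F pre B post = c * ins m G pre' B post'"
  unfolding ins_def sum_distrib_left
proof (rule sum.cong[OF refl])
  fix e
  assume "e \<in> {e. m B e \<noteq> 0}"
  then have "sd deg e = eps deg B + 1"
    using assms(1) by (simp add: degree_one_def)
  then show "m B e * F (pre @ e # post) = c * (m B e * G (pre' @ e # post'))"
    using assms(2) by simp
qed

lemma sgnk_mult_cong: "(even a \<longleftrightarrow> even b) \<Longrightarrow> sgnk a * x = sgnk b * (x :: 'k::ring_1)"
  by (simp add: sgnk_def)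

text \<open>Substituting \<open>m(B)\<close> into the rotated cochain yields a term of \<open>b\<^sup>*\<eta>\<close> on a rotated
  input.  The four cases below differ in where the block \<open>B\<close> lies relative to the rotation
  cut: after it, before it, straddling the module entry, or (on the right-hand side of the
  bimodule equation) at the evaluation slot.\<close>

lemma ins_rot_cochain_after:
  fixes \<eta> :: "'b list \<Rightarrow> 'k::comm_ring_1"
  assumes "degree_one deg m" "length P1 = Suc k"
  shows "sgnk (eps deg (P1 @ P2)) * ins m (rot_cochain deg \<eta> k) (P1 @ P2) B Q
       = rsign deg (Suc k) (P1 @ P2 @ B @ Q) * (sgnk (eps deg P2) * ins m \<eta> P2 B (Q @ P1))"
proof -
  have ins: "ins m (rot_cochain deg \<eta> k) (P1 @ P2) B Q
      = sgnk (eps deg P1 * (eps deg P2 + (eps deg B + 1) + eps deg Q)) * ins m \<eta> P2 B (Q @ P1)"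
    by (rule ins_cong[OF assms(1)])
      (use assms(2) in \<open>simp add: rot_cochain_def rot_app rsign_app algebra_simps\<close>)
  have sign: "rsign deg (Suc k) (P1 @ P2 @ B @ Q)
      = (sgnk (eps deg P1 * (eps deg P2 + eps deg B + eps deg Q)) :: 'k)"
    using assms(2) by (simp add: rsign_app add.assoc)
  show ?thesis
    unfolding ins sign
    by (simp only: mult.assoc[symmetric] sgnk_mult)
      (rule sgnk_mult_cong, auto simp: even_add even_mult_iff)
qed

lemma ins_rot_cochain_before:
  fixes \<eta> :: "'b list \<Rightarrow> 'k::comm_ring_1"
  assumes "degree_one deg m" "length P1 + length P2 = k"
  shows "sgnk (eps deg P1) * ins m (rot_cochain deg \<eta> k) P1 B (P2 @ Q)
       = rsign deg (length P1 + length B + length P2) (P1 @ B @ P2 @ Q)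
         * (sgnk (eps deg (Q @ P1)) * ins m \<eta> (Q @ P1) B P2)"
proof -
  have ins: "ins m (rot_cochain deg \<eta> k) P1 B (P2 @ Q)
      = sgnk ((eps deg P1 + (eps deg B + 1) + eps deg P2) * eps deg Q) * ins m \<eta> (Q @ P1) B P2"
  proof (rule ins_cong[OF assms(1)])
    fix e
    assume e: "sd deg e = eps deg B + 1"
    have "rot (Suc k) (P1 @ e # P2 @ Q) = (Q @ P1) @ e # P2"
      using assms(2) rot_app[of "Suc k" "P1 @ e # P2" Q] by simp
    moreover have "rsign deg (Suc k) (P1 @ e # P2 @ Q)
        = (sgnk ((eps deg P1 + (eps deg B + 1) + eps deg P2) * eps deg Q) :: 'k)"
      using assms(2) rsign_app[of "Suc k" "P1 @ e # P2" deg Q] e by (simp add: algebra_simps)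
    ultimately show "rot_cochain deg \<eta> k (P1 @ e # P2 @ Q)
        = sgnk ((eps deg P1 + (eps deg B + 1) + eps deg P2) * eps deg Q) * \<eta> ((Q @ P1) @ e # P2)"
      unfolding rot_cochain_def by (simp only:)
  qed
  have sign: "rsign deg (length P1 + length B + length P2) (P1 @ B @ P2 @ Q)
      = (sgnk ((eps deg P1 + eps deg B + eps deg P2) * eps deg Q) :: 'k)"
    using rsign_app[of "length P1 + length B + length P2" "P1 @ B @ P2" deg Q] by (simp add: add.assoc)
  show ?thesis
    unfolding ins sign
    by (simp only: mult.assoc[symmetric] sgnk_mult)
      (rule sgnk_mult_cong, auto simp: even_add even_mult_iff)
qed

lemma ins_rot_cochain_cover:
  fixes \<eta> :: "'b list \<Rightarrow> 'k::comm_ring_1"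
  assumes "degree_one deg m"
  shows "sgnk (eps deg P) * ins m (rot_cochain deg \<eta> (length P)) P B Q
       = rsign deg (length P + length B) (P @ B @ Q) * (sgnk (eps deg (Q @ P)) * ins m \<eta> (Q @ P) B [])"
proof -
  have ins: "ins m (rot_cochain deg \<eta> (length P)) P B Q
      = sgnk ((eps deg P + (eps deg B + 1)) * eps deg Q) * ins m \<eta> (Q @ P) B []"
  proof (rule ins_cong[OF assms(1)])
    fix e
    assume e: "sd deg e = eps deg B + 1"
    have "rot (Suc (length P)) (P @ e # Q) = (Q @ P) @ [e]"
      using rot_app[of "Suc (length P)" "P @ [e]" Q] by simp
    moreover have "rsign deg (Suc (length P)) (P @ e # Q)
        = (sgnk ((eps deg P + (eps deg B + 1)) * eps deg Q) :: 'k)"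
      using rsign_app[of "Suc (length P)" "P @ [e]" deg Q] e by (simp add: algebra_simps)
    ultimately show "rot_cochain deg \<eta> (length P) (P @ e # Q)
        = sgnk ((eps deg P + (eps deg B + 1)) * eps deg Q) * \<eta> ((Q @ P) @ [e])"
      unfolding rot_cochain_def by (simp only:)
  qed
  have sign: "rsign deg (length P + length B) (P @ B @ Q)
      = (sgnk ((eps deg P + eps deg B) * eps deg Q) :: 'k)"
    by (simp add: rsign_app2)
  show ?thesis
    unfolding ins sign
    by (simp only: mult.assoc[symmetric] sgnk_mult)
      (rule sgnk_mult_cong, auto simp: even_add even_mult_iff)
qed

lemma ins_rot_cochain_rhs:
  fixes \<eta> :: "'b list \<Rightarrow> 'k::comm_ring_1"
  assumes "degree_one deg m" "length B1 = Suc k"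
  shows "rsign deg (length P) (P @ B1 @ B2 @ Q) * sgnk (eps deg (B1 @ B2))
         * ins m (rot_cochain deg \<eta> k) (B1 @ B2) (Q @ P) []
       = rsign deg (length P + length B1) (P @ B1 @ B2 @ Q) * (sgnk (eps deg B2) * ins m \<eta> B2 (Q @ P) B1)"
proof -
  have ins: "ins m (rot_cochain deg \<eta> k) (B1 @ B2) (Q @ P) []
      = sgnk (eps deg B1 * (eps deg B2 + (eps deg Q + eps deg P + 1))) * ins m \<eta> B2 (Q @ P) B1"
    by (rule ins_cong[OF assms(1)])
      (use assms(2) in \<open>simp add: rot_cochain_def rot_app rsign_app\<close>)
  have sign_P: "rsign deg (length P) (P @ B1 @ B2 @ Q)
      = (sgnk (eps deg P * (eps deg B1 + eps deg B2 + eps deg Q)) :: 'k)"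
    by (simp add: rsign_app add.assoc)
  have sign_PB1: "rsign deg (length P + length B1) (P @ B1 @ B2 @ Q)
      = (sgnk ((eps deg P + eps deg B1) * (eps deg B2 + eps deg Q)) :: 'k)"
    by (simp add: rsign_app2)
  show ?thesis
    unfolding ins sign_P sign_PB1
    by (simp only: mult.assoc[symmetric] sgnk_mult)
      (rule sgnk_mult_cong, auto simp: even_add even_mult_iff)
qed

lemma take_split_at: "i \<le> j \<Longrightarrow> take j xs = take i xs @ take (j - i) (drop i xs)"
  by (metis le_add_diff_inverse take_add)

lemma drop_block: "drop i xs = take L (drop i xs) @ drop (i + L) xs"
  by (metis append_take_drop_id drop_drop add.commute)

lemma lhs_term_after:
  fixes \<eta> :: "'b list \<Rightarrow> 'k::comm_ring_1"
  assumes "degree_one deg m" "Suc k \<le> i" "i + L \<le> length xs"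
  shows "sgnk (eps deg (take i xs)) * ins m (rot_cochain deg \<eta> k)
         (take i xs) (take L (drop i xs)) (drop (i + L) xs)
       = rhterm deg m \<eta> xs (Suc k) (i - Suc k) L"
proof -
  define P1 where "P1 = take (Suc k) xs"
  define P2 where "P2 = take (i - Suc k) (drop (Suc k) xs)"
  define B where "B = take L (drop i xs)"
  define Q where "Q = drop (i + L) xs"
  have take_i: "take i xs = P1 @ P2"
    unfolding P1_def P2_def using assms(2) by (rule take_split_at)
  have xs: "xs = P1 @ P2 @ B @ Q"
    by (metis append_take_drop_id take_i drop_block B_def Q_def append.assoc)
  have len: "length P1 = Suc k" "length P2 = i - Suc k" "length B = L"
    unfolding P1_def P2_def B_def using assms by auto
  have "sgnk (eps deg (take i xs)) * ins m (rot_cochain deg \<eta> k)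
        (take i xs) (take L (drop i xs)) (drop (i + L) xs)
      = rsign deg (Suc k) (P1 @ P2 @ B @ Q) * (sgnk (eps deg P2) * ins m \<eta> P2 B (Q @ P1))"
    unfolding take_i B_def[symmetric] Q_def[symmetric] by (rule ins_rot_cochain_after[OF assms(1) len(1)])
  also have "\<dots> = rhterm deg m \<eta> xs (Suc k) (i - Suc k) L"
    unfolding rhterm_def xs[symmetric]
    using hterm_split[of deg m \<eta> P2 B "Q @ P1"] rot_app[of "Suc k" P1 "P2 @ B @ Q"] len
    by (simp add: xs[symmetric])
  finally show ?thesis .
qed

lemma lhs_term_before:
  fixes \<eta> :: "'b list \<Rightarrow> 'k::comm_ring_1"
  assumes "degree_one deg m" "i + L \<le> k" "Suc k \<le> length xs"
  shows "sgnk (eps deg (take i xs)) * ins m (rot_cochain deg \<eta> (Suc k - L))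
         (take i xs) (take L (drop i xs)) (drop (i + L) xs)
       = rhterm deg m \<eta> xs (Suc k) (i + length xs - Suc k) L"
proof -
  define P1 where "P1 = take i xs"
  define B where "B = take L (drop i xs)"
  define P2 where "P2 = take (Suc k - (i + L)) (drop (i + L) xs)"
  define Q where "Q = drop (Suc k) xs"
  have drop_iL: "drop (i + L) xs = P2 @ Q"
    unfolding P2_def Q_def using drop_block[of "i + L" xs "Suc k - (i + L)"] assms by simp
  have xs: "xs = P1 @ B @ P2 @ Q"
    unfolding P1_def B_def by (metis append_take_drop_id drop_block drop_iL)
  have len: "length P1 = i" "length P2 = Suc k - (i + L)" "length B = L"
    unfolding P1_def P2_def B_def using assms by auto
  have "sgnk (eps deg (take i xs)) * ins m (rot_cochain deg \<eta> (Suc k - L))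
        (take i xs) (take L (drop i xs)) (drop (i + L) xs)
      = rsign deg (length P1 + length B + length P2) (P1 @ B @ P2 @ Q)
        * (sgnk (eps deg (Q @ P1)) * ins m \<eta> (Q @ P1) B P2)"
    unfolding P1_def[symmetric] B_def[symmetric] drop_iL
    by (rule ins_rot_cochain_before[OF assms(1)]) (use len assms in simp)
  also have "\<dots> = rhterm deg m \<eta> xs (Suc k) (i + length xs - Suc k) L"
  proof -
    have cut: "length P1 + length B + length P2 = Suc k"
      using len assms by simp
    have shift: "i + length xs - Suc k = length (Q @ P1)"
      using len assms by (simp add: Q_def)
    have rot_xs: "rot (Suc k) xs = (Q @ P1) @ B @ P2"
      using rot_app[of "Suc k" "P1 @ B @ P2" Q] cut xs by simp
    show ?thesis
      unfolding rhterm_def cut xs[symmetric] rot_xs shift len(3)[symmetric] hterm_split ..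
  qed
  finally show ?thesis .
qed

lemma lhs_term_cover:
  fixes \<eta> :: "'b list \<Rightarrow> 'k::comm_ring_1"
  assumes "degree_one deg m" "i + L \<le> length xs"
  shows "sgnk (eps deg (take i xs)) * ins m (rot_cochain deg \<eta> i)
         (take i xs) (take L (drop i xs)) (drop (i + L) xs)
       = rhterm deg m \<eta> xs (i + L) (length xs - L) L"
proof -
  define P where "P = take i xs"
  define B where "B = take L (drop i xs)"
  define Q where "Q = drop (i + L) xs"
  have xs: "xs = P @ B @ Q"
    unfolding P_def B_def Q_def by (metis append_take_drop_id drop_block)
  have len: "length P = i" "length B = L"
    unfolding P_def B_def using assms by auto
  have "sgnk (eps deg (take i xs)) * ins m (rot_cochain deg \<eta> i)
        (take i xs) (take L (drop i xs)) (drop (i + L) xs)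
      = sgnk (eps deg P) * ins m (rot_cochain deg \<eta> (length P)) P B Q"
    unfolding P_def B_def Q_def len(1)[unfolded P_def] ..
  also have "\<dots> = rsign deg (length P + length B) (P @ B @ Q) * (sgnk (eps deg (Q @ P)) * ins m \<eta> (Q @ P) B [])"
    by (rule ins_rot_cochain_cover[OF assms(1)])
  also have "\<dots> = rhterm deg m \<eta> xs (i + L) (length xs - L) L"
  proof -
    have "rot (i + L) xs = (Q @ P) @ B @ []"
      using rot_app[of "i + L" "P @ B" Q] len xs by simp
    moreover have "length xs - L = length (Q @ P)"
      using len xs by simp
    ultimately have "hterm deg m \<eta> (rot (i + L) xs) (length xs - L) L
        = sgnk (eps deg (Q @ P)) * ins m \<eta> (Q @ P) B []"
      using hterm_split[of deg m \<eta> "Q @ P" B "[]"] len by simp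
    then show ?thesis
      unfolding rhterm_def using len xs by simp
  qed
  finally show ?thesis .
qed

lemma rhs_term_plain:
  assumes "i + L \<le> length xs"
  shows "rsign deg i xs * (sgnk (eps deg (take L (drop i xs)))
           * ins m \<eta> (take L (drop i xs)) (drop (i + L) xs @ take i xs) [])
       = rhterm deg m \<eta> xs i L (length xs - L)"
  using assms by (simp add: rhterm_def hterm_def rot_def min_def add.commute)

lemma rhs_term_rotated:
  fixes \<eta> :: "'b list \<Rightarrow> 'k::comm_ring_1"
  assumes "degree_one deg m" "i \<le> k" "Suc k \<le> i + L" "i + L \<le> length xs"
  shows "rsign deg i xs * sgnk (eps deg (take L (drop i xs)))
           * ins m (rot_cochain deg \<eta> (k - i)) (take L (drop i xs)) (drop (i + L) xs @ take i xs) []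
       = rhterm deg m \<eta> xs (Suc k) (i + L - Suc k) (length xs - L)"
proof -
  define P where "P = take i xs"
  define B1 where "B1 = take (Suc k - i) (drop i xs)"
  define B2 where "B2 = take (i + L - Suc k) (drop (Suc k) xs)"
  define Q where "Q = drop (i + L) xs"
  have drop_i: "drop i xs = B1 @ drop (Suc k) xs"
    unfolding B1_def using drop_block[of i xs "Suc k - i"] assms by simp
  have drop_k: "drop (Suc k) xs = B2 @ Q"
    unfolding B2_def Q_def using drop_block[of "Suc k" xs "i + L - Suc k"] assms by simp
  have xs: "xs = P @ B1 @ B2 @ Q"
    unfolding P_def by (metis append_take_drop_id drop_i drop_k)
  have len: "length P = i" "length B1 = Suc (k - i)" "length B2 = i + L - Suc k"
    "length Q = length xs - (i + L)"
    unfolding P_def B1_def B2_def Q_def using assms by auto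
  have block: "take L (drop i xs) = B1 @ B2"
    using drop_i drop_k len assms by simp
  have "rot (Suc k) xs = B2 @ (Q @ P) @ B1"
    using rot_app[of "Suc k" "P @ B1" "B2 @ Q"] len assms xs by simp
  then have hterm_k: "hterm deg m \<eta> (rot (Suc k) xs) (i + L - Suc k) (length xs - L)
      = sgnk (eps deg B2) * ins m \<eta> B2 (Q @ P) B1"
    using hterm_split[of deg m \<eta> B2 "Q @ P" B1] len assms by simp
  have cut: "length P + length B1 = Suc k"
    using len assms by simp
  have rhs: "rsign deg (length P) xs * sgnk (eps deg (B1 @ B2))
      * ins m (rot_cochain deg \<eta> (k - i)) (B1 @ B2) (Q @ P) []
      = rsign deg (Suc k) xs * (sgnk (eps deg B2) * ins m \<eta> B2 (Q @ P) B1)"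
    using ins_rot_cochain_rhs[OF assms(1) len(2), of P B2 Q \<eta>] unfolding cut xs[symmetric] .
  show ?thesis
    using rhs[unfolded len(1)]
    unfolding P_def[symmetric] Q_def[symmetric] block rhterm_def hterm_k .
qed

lemma rhs_term:
  fixes \<eta> :: "'b list \<Rightarrow> 'k::comm_ring_1"
  assumes "degree_one deg m" "i \<le> k" "Suc k \<le> i + L" "i + L \<le> length xs"
  shows "- (rsign deg i xs * sgnk (eps deg (take L (drop i xs)))) *
           ins m (phi_tilde deg \<eta> (k - i)) (take L (drop i xs)) (drop (i + L) xs @ take i xs) []
       = - rhterm deg m \<eta> xs i L (length xs - L) + rhterm deg m \<eta> xs (Suc k) (i + L - Suc k) (length xs - L)"
  unfolding ins_phi_tilde rhs_term_plain[OF assms(4), symmetric] rhs_term_rotated[OF assms, symmetric]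
  by (simp add: algebra_simps)

section \<open>Matching the terms: reindexing the double sums\<close>

text \<open>Index pairs of the right-hand side of the bimodule equation (the block containing the
  evaluation slot also contains the module entry \<open>k\<close>), and the decomposition of the inner
  index pairs according to the position of the block relative to the module entry \<open>k\<close>.\<close>
definition rhs_idx :: "nat \<Rightarrow> nat \<Rightarrow> (nat \<times> nat) set" where
  "rhs_idx n k = {(i, L). i \<le> k \<and> k + 1 - i \<le> L \<and> L \<le> n - 1 - i}"

definition after_idx :: "nat \<Rightarrow> nat \<Rightarrow> (nat \<times> nat) set" where
  "after_idx n k = {(i, L). Suc k \<le> i \<and> 1 \<le> L \<and> i + L \<le> n - 1}"

definition before_idx :: "nat \<Rightarrow> nat \<Rightarrow> (nat \<times> nat) set" where
  "before_idx n k = {(i, L). 1 \<le> L \<and> i + L \<le> k}"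

definition cover_idx :: "nat \<Rightarrow> nat \<Rightarrow> (nat \<times> nat) set" where
  "cover_idx n k = {(i, L). i \<le> k \<and> k < i + L \<and> i + L \<le> n - 1}"

lemma finite_rhs_idx: "finite (rhs_idx n k)"
  by (rule finite_nat_box[of _ n]) (auto simp: rhs_idx_def)

lemma sum_rhs_idx:
  "(\<Sum>i\<le>k. \<Sum>L\<in>{k + 1 - i..n - 1 - i}. f i L) = (\<Sum>(i, L)\<in>rhs_idx n k. f i L)"
proof -
  have sigma: "Sigma {..k} (\<lambda>i. {k + 1 - i..n - 1 - i}) = rhs_idx n k"
    by (auto simp: rhs_idx_def)
  show ?thesis
    unfolding sigma[symmetric] by (rule sum.Sigma) auto
qed

lemma inner_idx_split:
  assumes "Suc (Suc k) \<le> n"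
  shows "(\<Sum>(i, L)\<in>inner_idx n. f i L) = (\<Sum>(i, L)\<in>after_idx n k. f i L)
           + (\<Sum>(i, L)\<in>before_idx n k. f i L) + (\<Sum>(i, L)\<in>cover_idx n k. f i L)"
proof -
  have split: "inner_idx n = (after_idx n k \<union> before_idx n k) \<union> cover_idx n k"
    using assms by (auto simp: inner_idx_def after_idx_def before_idx_def cover_idx_def)
  have finite: "finite (after_idx n k)" "finite (before_idx n k)" "finite (cover_idx n k)"
    by (rule finite_nat_box[of _ n], force simp: after_idx_def,
        rule finite_nat_box[of _ k], force simp: before_idx_def,
        rule finite_nat_box[of _ n], force simp: cover_idx_def)
  have disjoint: "after_idx n k \<inter> before_idx n k = {}"
    "(after_idx n k \<union> before_idx n k) \<inter> cover_idx n k = {}"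
    by (auto simp: after_idx_def before_idx_def cover_idx_def)
  show ?thesis
    unfolding split by (simp add: sum.union_disjoint finite disjoint)
qed

text \<open>In the rotated input \<open>rot_{k+1} xs\<close> the original first \<open>k + 1\<close> entries come last.  Hence
  the inner blocks of the rotated input are: the images of blocks lying after the module entry
  (shifted left by \<open>k + 1\<close>), the images of blocks lying before it (shifted right), and the
  straddling blocks, which come from the right-hand side of the bimodule equation.\<close>
lemma inner_reindex:
  fixes h :: "nat \<Rightarrow> nat \<Rightarrow> 'a::comm_monoid_add"
  assumes "Suc (Suc k) \<le> n"
  shows "(\<Sum>(i, L)\<in>inner_idx n. h i L)
       = (\<Sum>(i, L)\<in>after_idx n k. h (i - Suc k) L) + (\<Sum>(i, L)\<in>before_idx n k. h (i + n - Suc k) L)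
         + (\<Sum>(i, L)\<in>rhs_idx n k. h (i + L - Suc k) (n - L))"
proof -
  define front where "front = {(i, L). 1 \<le> L \<and> i + L \<le> n - 2 - k}"
  define rear where "rear = {(i, L). 1 \<le> L \<and> n - 1 - k \<le> i \<and> i + L \<le> n - 1}"
  define straddle where
    "straddle = {(i, L). i \<le> n - 2 - k \<and> n - 1 - k \<le> i + L \<and> i + L \<le> n - 1}"
  have finite: "finite front" "finite rear" "finite straddle"
    unfolding front_def rear_def straddle_def by (rule finite_nat_box[of _ n], auto)+
  have split: "inner_idx n = (front \<union> rear) \<union> straddle"
    using assms by (auto simp: inner_idx_def front_def rear_def straddle_def)
  have disjoint: "front \<inter> rear = {}" "(front \<union> rear) \<inter> straddle = {}"
    using assms by (auto simp: front_def rear_def straddle_def)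
  have "bij_betw (\<lambda>(i, L). (i - Suc k, L)) (after_idx n k) front"
    by (rule bij_betw_byWitness[where f' = "\<lambda>(i, L). (i + Suc k, L)"])
      (auto simp: after_idx_def front_def)
  from sum.reindex_bij_betw[OF this, of "\<lambda>(i, L). h i L"]
  have front_sum: "(\<Sum>(i, L)\<in>after_idx n k. h (i - Suc k) L) = (\<Sum>(i, L)\<in>front. h i L)"
    by (simp add: case_prod_unfold)
  have "bij_betw (\<lambda>(i, L). (i + n - Suc k, L)) (before_idx n k) rear"
    by (rule bij_betw_byWitness[where f' = "\<lambda>(i, L). (i - (n - Suc k), L)"])
      (use assms in \<open>auto simp: before_idx_def rear_def\<close>)
  from sum.reindex_bij_betw[OF this, of "\<lambda>(i, L). h i L"]
  have rear_sum: "(\<Sum>(i, L)\<in>before_idx n k. h (i + n - Suc k) L) = (\<Sum>(i, L)\<in>rear. h i L)"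
    by (simp add: case_prod_unfold)
  have "bij_betw (\<lambda>(i, L). (i + L - Suc k, n - L)) (rhs_idx n k) straddle"
    by (rule bij_betw_byWitness[where f' = "\<lambda>(i, L). (i + L + Suc k - n, n - L)"])
      (use assms in \<open>auto simp: rhs_idx_def straddle_def\<close>)
  from sum.reindex_bij_betw[OF this, of "\<lambda>(i, L). h i L"]
  have straddle_sum: "(\<Sum>(i, L)\<in>rhs_idx n k. h (i + L - Suc k) (n - L)) = (\<Sum>(i, L)\<in>straddle. h i L)"
    by (simp add: case_prod_unfold)
  show ?thesis
    unfolding front_sum rear_sum straddle_sum split
    by (simp add: sum.union_disjoint finite disjoint)
qed

text \<open>The outer terms: the rotation shift maps the outer index pairs bijectively onto those
  whose block, read cyclically in \<open>xs\<close>, does not contain both the evaluation slot and the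
  module entry (\<open>keep\<close>) or contains the evaluation slot and reaches the module entry only
  after wrapping around (\<open>wrap\<close>, the images of the covering left-hand side blocks).  The
  complement of \<open>keep\<close> among the outer pairs of \<open>xs\<close> is the right-hand side index set.\<close>
lemma outer_reindex:
  fixes V :: "nat \<Rightarrow> nat \<Rightarrow> 'a::ab_group_add"
  assumes "Suc (Suc k) \<le> n"
  shows "(\<Sum>(j, p)\<in>outer_idx n. V j p) - (\<Sum>(i, L)\<in>rhs_idx n k. V i L)
       = (\<Sum>(j, p)\<in>outer_idx n. V (rot_shift n k j) p) - (\<Sum>(i, L)\<in>cover_idx n k. V (i + L) (n - L))"
proof -
  define keep where "keep = {(a, p). a < n \<and> a + p \<le> n - 1 \<and> (k < a \<or> a + p \<le> k)}"
  define wrap where "wrap = {(a, p). k < a \<and> a < n \<and> n \<le> a + p \<and> a + p \<le> n + k}"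
  define shifted where
    "shifted = {(a, p). a < n \<and> (if k < a then p \<le> n - a + k else p \<le> k - a)}"
  have finite: "finite keep" "finite wrap"
    unfolding keep_def wrap_def by (rule finite_nat_box[of _ "n + k"], auto)+
  have outer_split: "outer_idx n = rhs_idx n k \<union> keep" "rhs_idx n k \<inter> keep = {}"
    using assms by (auto simp: outer_idx_def rhs_idx_def keep_def)
  have shifted_split: "shifted = wrap \<union> keep" "wrap \<inter> keep = {}"
    using assms by (auto simp: shifted_def wrap_def keep_def split: if_splits)
  have "bij_betw (\<lambda>(j, p). (rot_shift n k j, p)) (outer_idx n) shifted"
    by (rule bij_betw_byWitness[where f' = "\<lambda>(a, p). (if k < a then a - Suc k else a + n - Suc k, p)"])
      (use assms in \<open>auto simp: outer_idx_def shifted_def rot_shift_def split: if_splits\<close>)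
  from sum.reindex_bij_betw[OF this, of "\<lambda>(a, p). V a p"]
  have shifted_sum: "(\<Sum>(j, p)\<in>outer_idx n. V (rot_shift n k j) p) = (\<Sum>(a, p)\<in>shifted. V a p)"
    by (simp add: case_prod_unfold)
  have "bij_betw (\<lambda>(i, L). (i + L, n - L)) (cover_idx n k) wrap"
    by (rule bij_betw_byWitness[where f' = "\<lambda>(a, p). (a + p - n, n - p)"])
      (use assms in \<open>auto simp: cover_idx_def wrap_def\<close>)
  from sum.reindex_bij_betw[OF this, of "\<lambda>(a, p). V a p"]
  have wrap_sum: "(\<Sum>(i, L)\<in>cover_idx n k. V (i + L) (n - L)) = (\<Sum>(a, p)\<in>wrap. V a p)"
    by (simp add: case_prod_unfold)
  show ?thesis
    unfolding shifted_sum wrap_sum unfolding outer_split(1) shifted_split(1)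
    by (simp add: sum.union_disjoint finite_rhs_idx finite outer_split(2) shifted_split(2))
qed

text \<open>Position of the module entry after substituting an operation into the block of length
  \<open>L\<close> at position \<open>i\<close>, when it was at position \<open>k\<close> before.\<close>
definition module_pos :: "nat \<Rightarrow> nat \<Rightarrow> nat \<Rightarrow> nat" where
  "module_pos k i L = (if i \<le> k \<and> k < i + L then i else if i + L \<le> k then k + 1 - L else k)"

definition bimod_lhs :: "('b \<Rightarrow> int) \<Rightarrow> ('b list \<Rightarrow> 'b \<Rightarrow> 'k::comm_ring_1) \<Rightarrow> (nat \<Rightarrow> 'b list \<Rightarrow> 'k)
    \<Rightarrow> nat \<Rightarrow> 'b list \<Rightarrow> 'k" where
  "bimod_lhs deg m \<psi> k xs = (\<Sum>i<length xs. \<Sum>L\<in>{1..length xs - 1 - i}.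
     sgnk (eps deg (take i xs)) *
     ins m (\<psi> (module_pos k i L)) (take i xs) (take L (drop i xs)) (drop (i + L) xs))"

definition bimod_rhs :: "('b \<Rightarrow> int) \<Rightarrow> ('b list \<Rightarrow> 'b \<Rightarrow> 'k::comm_ring_1) \<Rightarrow> (nat \<Rightarrow> 'b list \<Rightarrow> 'k)
    \<Rightarrow> nat \<Rightarrow> 'b list \<Rightarrow> 'k" where
  "bimod_rhs deg m \<psi> k xs = (\<Sum>i\<le>k. \<Sum>L\<in>{k + 1 - i..length xs - 1 - i}.
     - (rsign deg i xs * sgnk (eps deg (take L (drop i xs)))) *
     ins m (\<psi> (k - i)) (take L (drop i xs)) (drop (i + L) xs @ take i xs) [])"

lemma bimod_map_iff:
  "bimod_map deg m \<psi> \<longleftrightarrow>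
     (\<forall>k xs. Suc (Suc k) \<le> length xs \<longrightarrow> bimod_lhs deg m \<psi> k xs = bimod_rhs deg m \<psi> k xs)"
  unfolding bimod_map_def bimod_lhs_def bimod_rhs_def module_pos_def ..

lemma bimod_lhs_phi_tilde:
  fixes \<eta> :: "'b list \<Rightarrow> 'k::comm_ring_1"
  assumes m: "degree_one deg m" and k: "Suc (Suc k) \<le> length xs"
  defines "n \<equiv> length xs"
  shows "bimod_lhs deg m (phi_tilde deg \<eta>) k xs
     = (\<Sum>(i, L)\<in>inner_idx n. rhterm deg m \<eta> xs 0 i L)
       - ((\<Sum>(i, L)\<in>after_idx n k. rhterm deg m \<eta> xs (Suc k) (i - Suc k) L)
        + (\<Sum>(i, L)\<in>before_idx n k. rhterm deg m \<eta> xs (Suc k) (i + n - Suc k) L)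
        + (\<Sum>(i, L)\<in>cover_idx n k. rhterm deg m \<eta> xs (i + L) (n - L) L))"
proof -
  define g where "g i L = sgnk (eps deg (take i xs))
    * ins m (rot_cochain deg \<eta> (module_pos k i L)) (take i xs) (take L (drop i xs)) (drop (i + L) xs)"
    for i L
  have split: "bimod_lhs deg m (phi_tilde deg \<eta>) k xs
      = (\<Sum>(i, L)\<in>inner_idx n. rhterm deg m \<eta> xs 0 i L) - (\<Sum>(i, L)\<in>inner_idx n. g i L)"
    unfolding bimod_lhs_def sum_inner_idx n_def sum_subtractf[symmetric]
    by (rule sum.cong) (auto simp: g_def ins_phi_tilde right_diff_distrib rhterm_def hterm_def)
  have after: "(\<Sum>(i, L)\<in>after_idx n k. g i L)
      = (\<Sum>(i, L)\<in>after_idx n k. rhterm deg m \<eta> xs (Suc k) (i - Suc k) L)"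
    by (rule sum.cong)
      (auto simp: after_idx_def n_def g_def module_pos_def intro!: lhs_term_after[OF m])
  have before: "(\<Sum>(i, L)\<in>before_idx n k. g i L)
      = (\<Sum>(i, L)\<in>before_idx n k. rhterm deg m \<eta> xs (Suc k) (i + n - Suc k) L)"
    using k by (intro sum.cong)
      (auto simp: before_idx_def n_def g_def module_pos_def intro!: lhs_term_before[OF m])
  have cover: "(\<Sum>(i, L)\<in>cover_idx n k. g i L)
      = (\<Sum>(i, L)\<in>cover_idx n k. rhterm deg m \<eta> xs (i + L) (n - L) L)"
    by (rule sum.cong)
      (auto simp: cover_idx_def n_def g_def module_pos_def intro!: lhs_term_cover[OF m])
  show ?thesis
    unfolding split inner_idx_split[OF k[folded n_def], of g] after before cover ..
qed

lemma bimod_rhs_phi_tilde: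
  fixes \<eta> :: "'b list \<Rightarrow> 'k::comm_ring_1"
  assumes m: "degree_one deg m" and k: "Suc (Suc k) \<le> length xs"
  defines "n \<equiv> length xs"
  shows "bimod_rhs deg m (phi_tilde deg \<eta>) k xs
     = - (\<Sum>(i, L)\<in>rhs_idx n k. rhterm deg m \<eta> xs i L (n - L))
       + (\<Sum>(i, L)\<in>rhs_idx n k. rhterm deg m \<eta> xs (Suc k) (i + L - Suc k) (n - L))"
  unfolding bimod_rhs_def sum_rhs_idx n_def sum_negf[symmetric] sum.distrib[symmetric]
  by (rule sum.cong[OF refl], clarify, rule rhs_term[OF m]) (use k in \<open>auto simp: rhs_idx_def\<close>)

lemma bimod_defect:
  fixes \<eta> :: "'b list \<Rightarrow> 'k::comm_ring_1"
  assumes m: "degree_one deg m" and k: "Suc (Suc k) \<le> length xs"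
  shows "bimod_lhs deg m (phi_tilde deg \<eta>) k xs - bimod_rhs deg m (phi_tilde deg \<eta>) k xs
       = hoch_b deg m \<eta> xs - rsign deg (Suc k) xs * hoch_b deg m \<eta> (rot (Suc k) xs)"
proof -
  let ?n = "length xs"
  define V where "V a p = rhterm deg m \<eta> xs a p (?n - p)" for a p
  define h where "h i L = rhterm deg m \<eta> xs (Suc k) i L" for i L
  have cover: "(\<Sum>(i, L)\<in>cover_idx ?n k. rhterm deg m \<eta> xs (i + L) (?n - L) L)
      = (\<Sum>(i, L)\<in>cover_idx ?n k. V (i + L) (?n - L))"
    by (rule sum.cong) (auto simp: cover_idx_def V_def)
  have "hoch_b deg m \<eta> xs
      = (\<Sum>(i, L)\<in>inner_idx ?n. rhterm deg m \<eta> xs 0 i L) + (\<Sum>(j, p)\<in>outer_idx ?n. V j p)"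
    unfolding hoch_b_terms V_def ..
  moreover have "rsign deg (Suc k) xs * hoch_b deg m \<eta> (rot (Suc k) xs)
      = (\<Sum>(i, L)\<in>inner_idx ?n. h i L) + (\<Sum>(j, p)\<in>outer_idx ?n. V (rot_shift ?n k j) p)"
    unfolding hoch_b_rot[OF Suc_leD[OF k]] h_def V_def ..
  ultimately show ?thesis
    unfolding bimod_lhs_phi_tilde[OF m k] bimod_rhs_phi_tilde[OF m k] cover
      inner_reindex[OF k, of h] h_def[symmetric] V_def[symmetric]
    using outer_reindex[OF k, of V] by (simp add: algebra_simps)
qed

lemma bimod_map_phi_tilde:
  fixes \<eta> :: "'b list \<Rightarrow> 'k::comm_ring_1"
  assumes m: "degree_one deg m"
    and rot_inv: "\<And>k xs. Suc (Suc k) \<le> length xs \<Longrightarrow>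
      rsign deg (Suc k) xs * hoch_b deg m \<eta> (rot (Suc k) xs) = hoch_b deg m \<eta> xs"
  shows "bimod_map deg m (phi_tilde deg \<eta>)"
  unfolding bimod_map_iff
proof (intro allI impI)
  fix k and xs :: "'b list"
  assume k: "Suc (Suc k) \<le> length xs"
  show "bimod_lhs deg m (phi_tilde deg \<eta>) k xs = bimod_rhs deg m (phi_tilde deg \<eta>) k xs"
    using bimod_defect[OF m k, of \<eta>] rot_inv[OF k] by simp
qed

section \<open>Normalized cochains: \<open>b\<^sup>*\<eta>\<close> vanishes on inputs containing the unit\<close>

text \<open>Let the unit sit at position \<open>t\<close> among the non-evaluation entries of \<open>xs\<close>.  By
  normalization every term of \<open>b\<^sup>*\<eta>(xs)\<close> in which the unit stays outside the operated block
  vanishes, and by strict unitality so does every term operating on a block containing the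
  unit, unless the block is \<open>[x, u]\<close> or \<open>[u, x]\<close>.  The (at most two) remaining terms cancel.\<close>

lemma hterm_unit_outside:
  assumes "normalized u \<eta>" "u \<in> set (take i zs) \<or> u \<in> set (butlast (drop (i + L) zs))"
  shows "hterm deg m \<eta> zs i L = 0"
proof -
  have "\<eta> (take i zs @ e # drop (i + L) zs) = 0" for e
    using assms by (cases "drop (i + L) zs") (auto simp: normalized_def butlast_append)
  then show ?thesis
    by (simp add: hterm_def ins_def)
qed

lemma hterm_unit_inside:
  assumes "unital deg m u" "u \<in> set (take L (drop i zs))" "L \<noteq> 2" "i + L \<le> length zs"
  shows "hterm deg m \<eta> zs i L = 0"
proof -
  have "length (take L (drop i zs)) \<noteq> 2"
    using assms by simp
  then have "{e. m (take L (drop i zs)) e \<noteq> 0} = {}"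
    using assms(1,2) unfolding unital_def by blast
  then show ?thesis
    by (simp add: hterm_def ins_def)
qed

lemma hterm_unit_vanish:
  assumes nz: "normalized u \<eta>" and un: "unital deg m u"
    and t: "zs ! t = u" "t < length zs" and iL: "i + L \<le> length zs"
    and not_last: "i + L \<le> t \<Longrightarrow> Suc t < length zs"
    and not_unit_pair: "\<not> (i \<le> t \<and> t < i + L \<and> L = 2)"
  shows "hterm deg m \<eta> zs i L = 0"
proof -
  consider "t < i" | "i + L \<le> t" | "i \<le> t" "t < i + L"
    by linarith
  then show ?thesis
  proof cases
    case 1
    then have "u \<in> set (take i zs)"
      using t by (metis in_set_conv_nth length_take min_less_iff_conj nth_take)
    then show ?thesis
      using hterm_unit_outside[OF nz] by blast
  next
    case 2
    then have "butlast (drop (i + L) zs) ! (t - (i + L)) = u"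
      "t - (i + L) < length (butlast (drop (i + L) zs))"
      using t not_last by (auto simp: nth_butlast)
    then have "u \<in> set (butlast (drop (i + L) zs))"
      by (metis nth_mem)
    then show ?thesis
      using hterm_unit_outside[OF nz] by blast
  next
    case 3
    then have "take L (drop i zs) ! (t - i) = u" "t - i < length (take L (drop i zs))"
      using t by auto
    then have "u \<in> set (take L (drop i zs))"
      by (metis nth_mem)
    then show ?thesis
      using hterm_unit_inside[OF un _ _ iL] not_unit_pair 3 by blast
  qed
qed

lemma inner_term_unit_vanish:
  assumes nz: "normalized u \<eta>" and un: "unital deg m u" and t: "xs ! t = u" "Suc t < length xs"
    and iL: "(i, L) \<in> inner_idx (length xs)" and not_pair: "\<not> ((Suc i = t \<or> i = t) \<and> L = 2)"
  shows "rhterm deg m \<eta> xs 0 i L = 0"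
  using iL not_pair t
  by (auto simp: rhterm_def inner_idx_def intro!: hterm_unit_vanish[OF nz un t(1)])

lemma outer_term_unit_vanish:
  assumes nz: "normalized u \<eta>" and un: "unital deg m u" and t: "xs ! t = u" "Suc t < length xs"
    and jp: "(j, p) \<in> outer_idx (length xs)"
    and not_pair: "\<not> (j = 0 \<and> p = length xs - 2 \<and> t = length xs - 2)"
      "\<not> (j = 1 \<and> p = length xs - 2 \<and> t = 0)"
  shows "rhterm deg m \<eta> xs j p (length xs - p) = 0"
proof -
  let ?n = "length xs"
  define pos where "pos = (if j \<le> t then t - j else ?n - j + t)"
  have jp': "j < ?n" "p \<le> ?n - 1 - j"
    using jp by (auto simp: outer_idx_def)
  have "rot j xs ! pos = u" "pos < ?n"
    using t jp' unfolding pos_def rot_def by (auto simp: nth_append)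
  moreover have "\<not> (p \<le> pos \<and> pos < p + (?n - p) \<and> ?n - p = 2)"
    using t not_pair jp' unfolding pos_def by (auto split: if_splits)
  ultimately have "hterm deg m \<eta> (rot j xs) p (?n - p) = 0"
    using jp' by (intro hterm_unit_vanish[OF nz un]) auto
  then show ?thesis
    by (simp add: rhterm_def)
qed

lemma ins_single:
  assumes "\<And>e. e \<noteq> x \<Longrightarrow> m B e = 0"
  shows "ins m F pre B post = m B x * F (pre @ x # post)"
proof (cases "m B x = 0")
  case True
  then have "{e. m B e \<noteq> 0} = {}"
    using assms by (metis (mono_tags) empty_Collect_eq)
  then show ?thesis
    using True by (simp add: ins_def)
next
  case False
  then have "{e. m B e \<noteq> 0} = {x}"
    using assms by auto
  then show ?thesis
    by (simp add: ins_def)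
qed

lemma hterm_unit_left:
  assumes un: "unital deg m u" and i: "Suc i < length zs" "zs ! i = u"
  shows "hterm deg m \<eta> zs i 2 = sgnk (eps deg (take i zs)) * \<eta> (take i zs @ drop (Suc i) zs)"
proof -
  have block: "take 2 (drop i zs) = [u, zs ! Suc i]"
    using i by (metis Cons_nth_drop_Suc Suc_lessD numeral_2_eq_2 take_Suc_Cons take_eq_Nil)
  have rest: "zs ! Suc i # drop (i + 2) zs = drop (Suc i) zs"
    using i by (metis Cons_nth_drop_Suc add_2_eq_Suc')
  have "ins m \<eta> (take i zs) [u, zs ! Suc i] (drop (i + 2) zs)
      = m [u, zs ! Suc i] (zs ! Suc i) * \<eta> (take i zs @ zs ! Suc i # drop (i + 2) zs)"
    by (rule ins_single) (use un in \<open>simp add: unital_def\<close>)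
  then show ?thesis
    using un unfolding hterm_def block rest by (simp add: unital_def)
qed

lemma hterm_unit_right:
  assumes un: "unital deg m u" and i: "Suc i < length zs" "zs ! Suc i = u"
  shows "hterm deg m \<eta> zs i 2
       = sgnk (eps deg (take i zs)) * sgnk (deg (zs ! i)) * \<eta> (take (Suc i) zs @ drop (Suc (Suc i)) zs)"
proof -
  have block: "take 2 (drop i zs) = [zs ! i, u]"
    using i by (metis Cons_nth_drop_Suc Suc_lessD numeral_2_eq_2 take_Suc_Cons take_eq_Nil)
  have rest: "take i zs @ zs ! i # drop (i + 2) zs = take (Suc i) zs @ drop (Suc (Suc i)) zs"
    using i by (simp add: take_Suc_conv_app_nth)
  have "ins m \<eta> (take i zs) [zs ! i, u] (drop (i + 2) zs)
      = m [zs ! i, u] (zs ! i) * \<eta> (take i zs @ zs ! i # drop (i + 2) zs)"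
    by (rule ins_single) (use un in \<open>simp add: unital_def\<close>)
  then show ?thesis
    using un unfolding hterm_def block rest by (simp add: unital_def mult.assoc)
qed

text \<open>The two surviving terms cancel: the unit absorbed from the left and from the right
  by inner terms, or, if the unit is the first entry, by an inner and an outer term.\<close>
lemma unit_cancel_inner:
  fixes \<eta> :: "'b list \<Rightarrow> 'k::comm_ring_1"
  assumes un: "unital deg m u" and t: "1 \<le> t" "Suc t < length xs" "xs ! t = u"
  shows "rhterm deg m \<eta> xs 0 (t - 1) 2 + rhterm deg m \<eta> xs 0 t 2 = 0"
proof -
  have t': "Suc (t - 1) = t"
    using t by simp
  have right: "hterm deg m \<eta> xs (t - 1) 2
      = sgnk (eps deg (take (t - 1) xs)) * sgnk (deg (xs ! (t - 1))) * \<eta> (take t xs @ drop (Suc t) xs)"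
    using hterm_unit_right[OF un, of "t - 1" xs \<eta>] t t' by simp
  have left: "hterm deg m \<eta> xs t 2 = sgnk (eps deg (take t xs)) * \<eta> (take t xs @ drop (Suc t) xs)"
    using hterm_unit_left[OF un, of t xs \<eta>] t by simp
  have "take t xs = take (t - 1) xs @ [xs ! (t - 1)]"
    using t t' by (metis Suc_lessD less_trans_Suc lessI take_Suc_conv_app_nth)
  then have sign: "sgnk (eps deg (take t xs))
      = - (sgnk (eps deg (take (t - 1) xs)) * sgnk (deg (xs ! (t - 1))) :: 'k)"
    unfolding sgnk_mult sgnk_neg by (simp add: sd_def even_add sgnk_cong)
  show ?thesis
    unfolding rhterm_def rot_0 rsign_0 left right sign by (simp add: algebra_simps)
qed

lemma unit_cancel_wrap:
  fixes \<eta> :: "'b list \<Rightarrow> 'k::comm_ring_1"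
  assumes un: "unital deg m u" and t: "2 \<le> length xs" "xs ! 0 = u"
  shows "rhterm deg m \<eta> xs 0 0 2 + rhterm deg m \<eta> xs 1 (length xs - 2) 2 = 0"
proof -
  obtain ys where "xs = u # ys" "ys \<noteq> []"
    using t by (cases xs) (auto simp flip: length_greater_0_conv)
  then obtain ws w where xs: "xs = u # ws @ [w]"
    by (cases ys rule: rev_cases) auto
  have left: "hterm deg m \<eta> xs 0 2 = \<eta> (ws @ [w])"
    using hterm_unit_left[OF un, of 0 xs \<eta>] xs by (simp add: sgnk_def)
  have right: "hterm deg m \<eta> (ws @ [w, u]) (length ws) 2
      = sgnk (eps deg ws) * sgnk (deg w) * \<eta> (ws @ [w])"
    using hterm_unit_right[OF un, of "length ws" "ws @ [w, u]" \<eta>] by (simp add: nth_append)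
  have "rsign deg 1 xs * (sgnk (eps deg ws) * sgnk (deg w))
      = (sgnk ((deg u - 1) * (eps deg ws + (deg w - 1)) + eps deg ws + deg w) :: 'k)"
    unfolding xs rsign_def by (simp add: sd_def sgnk_mult add.assoc)
  also have "\<dots> = - 1"
    using un by (simp add: unital_def sgnk_def even_add)
  finally have sign: "rsign deg 1 xs * (sgnk (eps deg ws) * sgnk (deg w)) = (- 1 :: 'k)" .
  have rot_xs: "rot 1 xs = ws @ [w, u]" and len: "length xs - 2 = length ws"
    by (simp_all add: xs rot_def)
  have "rhterm deg m \<eta> xs 1 (length xs - 2) 2
      = rsign deg 1 xs * (sgnk (eps deg ws) * sgnk (deg w)) * \<eta> (ws @ [w])"
    unfolding rhterm_def rot_xs len right by (simp add: mult.assoc)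
  then show ?thesis
    unfolding sign by (simp add: rhterm_def left)
qed

definition unit_inner_idx :: "nat \<Rightarrow> nat \<Rightarrow> (nat \<times> nat) set" where
  "unit_inner_idx n t = {x \<in> inner_idx n. (1 \<le> t \<and> x = (t - 1, 2)) \<or> x = (t, 2)}"

definition unit_outer_idx :: "nat \<Rightarrow> nat \<Rightarrow> (nat \<times> nat) set" where
  "unit_outer_idx n t = {x \<in> outer_idx n. (t = n - 2 \<and> x = (0, n - 2)) \<or> (t = 0 \<and> x = (1, n - 2))}"

lemma hoch_b_unit_terms:
  fixes \<eta> :: "'b list \<Rightarrow> 'k::comm_ring_1"
  assumes nz: "normalized u \<eta>" and un: "unital deg m u" and t: "xs ! t = u" "Suc t < length xs"
  shows "hoch_b deg m \<eta> xs
       = (\<Sum>(i, L)\<in>unit_inner_idx (length xs) t. rhterm deg m \<eta> xs 0 i L)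
       + (\<Sum>(j, p)\<in>unit_outer_idx (length xs) t. rhterm deg m \<eta> xs j p (length xs - p))"
  unfolding hoch_b_terms
  by (intro arg_cong2[where f = "(+)"] sum.mono_neutral_right finite_inner_idx finite_outer_idx)
    (auto simp: unit_inner_idx_def unit_outer_idx_def
      intro!: inner_term_unit_vanish[OF nz un t] outer_term_unit_vanish[OF nz un t])

lemma unit_terms_cancel:
  fixes \<eta> :: "'b list \<Rightarrow> 'k::comm_ring_1"
  assumes un: "unital deg m u" and t: "xs ! t = u" "Suc t < length xs"
  shows "(\<Sum>(i, L)\<in>unit_inner_idx (length xs) t. rhterm deg m \<eta> xs 0 i L)
       + (\<Sum>(j, p)\<in>unit_outer_idx (length xs) t. rhterm deg m \<eta> xs j p (length xs - p)) = 0"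
proof -
  let ?n = "length xs"
  consider "1 \<le> t" "t + 3 \<le> ?n" | "1 \<le> t" "t = ?n - 2" | "t = 0" "3 \<le> ?n" | "t = 0" "?n = 2"
    using t by linarith
  then show ?thesis
  proof cases
    case 1
    then have "unit_inner_idx ?n t = {(t - 1, 2), (t, 2)}" "unit_outer_idx ?n t = {}"
      by (auto simp: unit_inner_idx_def unit_outer_idx_def inner_idx_def)
    then show ?thesis
      using 1 unit_cancel_inner[OF un 1(1) t(2) t(1), of \<eta>] by simp
  next
    case 2
    then have "unit_inner_idx ?n t = {(t - 1, 2)}" "unit_outer_idx ?n t = {(0, t)}"
      using t by (auto simp: unit_inner_idx_def unit_outer_idx_def inner_idx_def outer_idx_def)
    moreover have "?n - t = 2"
      using 2 t by simp
    ultimately show ?thesis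
      using unit_cancel_inner[OF un 2(1) t(2) t(1), of \<eta>] by simp
  next
    case 3
    then have "unit_inner_idx ?n t = {(0, 2)}" "unit_outer_idx ?n t = {(1, ?n - 2)}"
      by (auto simp: unit_inner_idx_def unit_outer_idx_def inner_idx_def outer_idx_def)
    moreover have "?n - (?n - 2) = 2"
      using 3 by simp
    ultimately show ?thesis
      using 3 t unit_cancel_wrap[OF un, of xs \<eta>] by simp
  next
    case 4
    then have "unit_inner_idx ?n t = {}" "unit_outer_idx ?n t = {(0, 0), (1, 0)}"
      by (auto simp: unit_inner_idx_def unit_outer_idx_def inner_idx_def outer_idx_def)
    then show ?thesis
      using 4 t unit_cancel_wrap[OF un, of xs \<eta>] by simp
  qed
qed

lemma hoch_b_unit_vanish:
  fixes \<eta> :: "'b list \<Rightarrow> 'k::comm_ring_1"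
  assumes nz: "normalized u \<eta>" and un: "unital deg m u" and unit_in: "u \<in> set (butlast xs)"
  shows "hoch_b deg m \<eta> xs = 0"
proof -
  obtain t where "t < length (butlast xs)" "butlast xs ! t = u"
    using unit_in by (metis in_set_conv_nth)
  then have t: "xs ! t = u" "Suc t < length xs"
    by (auto simp: nth_butlast)
  show ?thesis
    unfolding hoch_b_unit_terms[OF nz un t] by (rule unit_terms_cancel[OF un t])
qed

section \<open>Rotation invariance of \<open>b\<^sup>*\<phi>\<^sub>0\<close> for a negative cyclic cocycle\<close>

lemma conn_B_unit_vanish:
  assumes "normalized u \<eta>" "u \<in> set xs"
  shows "conn_B deg u \<eta> xs = 0"
  unfolding conn_B_def
proof (rule sum.neutral, intro ballI)
  fix j
  have "u \<in> set (butlast (rot j xs @ [u]))"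
    using assms(2) by simp
  then show "rsign deg j xs * \<eta> (rot j xs @ [u]) = 0"
    using assms(1) by (simp add: normalized_def)
qed

text \<open>Connes' operator is a sum over all cyclic rotations, hence invariant under them.\<close>
lemma conn_B_rot:
  fixes \<eta> :: "'b list \<Rightarrow> 'k::comm_ring_1"
  assumes k: "Suc k \<le> length xs"
  shows "rsign deg (Suc k) xs * conn_B deg u \<eta> (rot (Suc k) xs) = conn_B deg u \<eta> xs"
proof -
  let ?n = "length xs"
  let ?term = "\<lambda>a. rsign deg a xs * \<eta> (rot a xs @ [u])"
  have "rsign deg (Suc k) xs * conn_B deg u \<eta> (rot (Suc k) xs) = (\<Sum>j<?n. ?term (rot_shift ?n k j))"
    unfolding conn_B_def length_rot sum_distrib_left
    using rot_rot_shift(1)[OF k] rot_rot_shift(2)[OF k, where 'k = 'k and deg = deg]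
    by (intro sum.cong) (auto simp: mult.assoc[symmetric])
  also have "\<dots> = (\<Sum>a<?n. ?term a)"
  proof (rule sum.reindex_bij_betw)
    show "bij_betw (rot_shift ?n k) {..<?n} {..<?n}"
      by (rule bij_betw_byWitness[where f' = "\<lambda>a. if k < a then a - Suc k else a + ?n - Suc k"])
        (use k in \<open>auto simp: rot_shift_def\<close>)
  qed
  finally show ?thesis
    unfolding conn_B_def .
qed

text \<open>The cocycle equation \<open>b\<^sup>*\<phi>\<^sub>0 = B\<^sup>*\<phi>\<^sub>1\<close> holds on all nonempty inputs: on inputs whose
  non-evaluation entries contain the unit both sides vanish.\<close>
lemma hoch_b_eq_conn_B:
  fixes \<phi> :: "nat \<Rightarrow> 'b list \<Rightarrow> 'k::comm_ring_1"
  assumes un: "unital deg m u" and cocycle: "neg_cyclic_cocycle deg m u \<phi>" and ne: "xs \<noteq> []"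
  shows "hoch_b deg m (\<phi> 0) xs = conn_B deg u (\<phi> 1) xs"
proof (cases "u \<in> set (butlast xs)")
  case True
  have "normalized u (\<phi> 0)" "normalized u (\<phi> 1)"
    using cocycle by (auto simp: neg_cyclic_cocycle_def)
  moreover have "u \<in> set xs"
    using True by (rule in_set_butlastD)
  ultimately show ?thesis
    using hoch_b_unit_vanish[OF _ un True] conn_B_unit_vanish by simp
next
  case False
  then show ?thesis
    using cocycle ne unfolding neg_cyclic_cocycle_def by (metis One_nat_def)
qed

lemma hoch_b_rot_invariant:
  fixes \<phi> :: "nat \<Rightarrow> 'b list \<Rightarrow> 'k::comm_ring_1"
  assumes "unital deg m u" "neg_cyclic_cocycle deg m u \<phi>" "Suc k \<le> length xs"
  shows "rsign deg (Suc k) xs * hoch_b deg m (\<phi> 0) (rot (Suc k) xs) = hoch_b deg m (\<phi> 0) xs"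
proof -
  have "xs \<noteq> []" "rot (Suc k) xs \<noteq> []"
    using assms(3) by (auto simp flip: length_0_conv)
  then show ?thesis
    using hoch_b_eq_conn_B[OF assms(1,2)] conn_B_rot[OF assms(3)] by simp
qed

theorem proposition6p1:
  fixes deg :: "'b \<Rightarrow> int"
    and m :: "'b list \<Rightarrow> 'b \<Rightarrow> 'k::field_char_0"
    and u :: 'b
    and \<phi> :: "nat \<Rightarrow> 'b list \<Rightarrow> 'k"
  assumes "ainf_alg deg m"
    and "unital deg m u"
    and "neg_cyclic_cocycle deg m u \<phi>"
  shows "bimod_map deg m (phi_tilde deg (\<phi> 0))
       \<and> skew_sym deg (phi_tilde deg (\<phi> 0))
       \<and> closed_ip deg (phi_tilde deg (\<phi> 0))"
proof (intro conjI)
  show "bimod_map deg m (phi_tilde deg (\<phi> 0))"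
  proof (rule bimod_map_phi_tilde)
    show "degree_one deg m"
      using assms(1) by (rule ainf_alg_degree_one)
    show "rsign deg (Suc k) xs * hoch_b deg m (\<phi> 0) (rot (Suc k) xs) = hoch_b deg m (\<phi> 0) xs"
      if "Suc (Suc k) \<le> length xs" for k and xs :: "'b list"
      using hoch_b_rot_invariant[OF assms(2,3)] that by simp
  qed
  show "skew_sym deg (phi_tilde deg (\<phi> 0))"
    by (rule skew_sym_phi_tilde)
  show "closed_ip deg (phi_tilde deg (\<phi> 0))"
    by (rule closed_ip_phi_tilde)
qed

end
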